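(* Let $\|\cdot\|_W$ be the wedge norm on $\mathbb{R}^p$ and let $S_\star=\{1,\dots,s\}$ with $s\in\{1,\dots,p-1\}$. Then for all $\beta\in\mathbb{R}^p$, $$\|\beta_{S_\star^{c}}\|_W\le\sqrt{|S_\star|+1}\;\Omega^{S_\star^{c}}(\beta_{S_\star^{c}}),$$ i.e. the constant $C_{S_\star}$ can be taken equal to $\sqrt{|S_\star|+1}$.
   Context: Let $\mathcal{A}:=\{a\in\mathbb{R}^p: a_j>0\ \forall j,\ a_1\ge\dots\ge a_p\}$ and $\|\beta\|_W:=\inf_{a\in\mathcal{A}}\frac12\sum_{j=1}^p\big(\beta_j^2/a_j+a_j\big)$. For $S=\{1,\dots,s\}$, $\beta_{S^c}$ is the vector in $\mathbb{R}^p$ with entries $\beta_j1\{j\notin S\}$, $\mathcal{A}_{S^c}:=\{(a_j)_{j\in S^c}:a\in\mathcal{A}\}$ and $\Omega^{S^c}(\beta_{S^c}):=\inf_{a\in\mathcal{A}_{S^c}}\frac12\sum_{j\in S^c}\big(\beta_j^2/a_j+a_j\big)$. *)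

theory Defs
  imports Complex_Main
begin

text \<open>Vectors in R^p are represented as functions nat => real, with coordinates
indexed by {1..p}; values outside {1..p} are irrelevant.\<close>

definition wedge_set :: "nat \<Rightarrow> (nat \<Rightarrow> real) set" where
  "wedge_set p = {a. (\<forall>j\<in>{1..p}. a j > 0) \<and> (\<forall>i\<in>{1..p}. \<forall>j\<in>{1..p}. i \<le> j \<longrightarrow> a j \<le> a i)}"

definition wedge_norm :: "nat \<Rightarrow> (nat \<Rightarrow> real) \<Rightarrow> real" where
  "wedge_norm p \<beta> = Inf {(1/2) * (\<Sum>j=1..p. \<beta> j ^ 2 / a j + a j) | a. a \<in> wedge_set p}"

definition restrict_compl :: "nat \<Rightarrow> (nat \<Rightarrow> real) \<Rightarrow> (nat \<Rightarrow> real)" where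
  "restrict_compl s \<beta> = (\<lambda>j. if j \<in> {1..s} then 0 else \<beta> j)"

text \<open>Omega^{S^c}: infimum over A_{S^c} = restrictions of elements of A to S^c = {s+1..p};
the objective only depends on the restriction, so we take the infimum over a in A.\<close>
definition Omega_compl :: "nat \<Rightarrow> nat \<Rightarrow> (nat \<Rightarrow> real) \<Rightarrow> real" where
  "Omega_compl p s \<beta> = Inf {(1/2) * (\<Sum>j\<in>{s+1..p}. \<beta> j ^ 2 / a j + a j) | a. a \<in> wedge_set p}"

end

theory Submission
  imports Defs
begin

text \<open>Given weights \<open>a\<close> admissible for \<open>\<Omega>\<^sup>S\<^sup>c\<close>, overwrite the entries on \<open>S = {1..s}\<close>
  by \<open>a\<^sub>s\<^sub>+\<^sub>1\<close> and divide all entries by \<open>r = \<surd>(s+1)\<close>: the result is still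
  nonincreasing, hence admissible for the wedge norm. As \<open>\<beta>\<close> vanishes on \<open>S\<close>, the quadratic
  terms only gain the factor \<open>r\<close>, while by monotonicity the linear terms sum to
  \<open>(s a\<^sub>s\<^sub>+\<^sub>1 + \<Sum>\<^sub>S\<^sub>c a\<^sub>j) / r \<le> (s+1)/r \<cdot> \<Sum>\<^sub>S\<^sub>c a\<^sub>j = r \<Sum>\<^sub>S\<^sub>c a\<^sub>j\<close>.\<close>

lemma const_in_wedge_set: "c > 0 \<Longrightarrow> (\<lambda>_. c) \<in> wedge_set p"
  unfolding wedge_set_def by simp

lemma scaled_in_wedge_set:
  assumes "a \<in> wedge_set p" and "c > 0"
  shows "(\<lambda>j. c * a j) \<in> wedge_set p"
  using assms unfolding wedge_set_def by (auto intro: mult_left_mono)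

lemma flattened_head_in_wedge_set:
  assumes a: "a \<in> wedge_set p" and "s < p"
  shows "(\<lambda>j. if j \<le> s then a (s + 1) else a j) \<in> wedge_set p"
proof -
  have pos: "a j > 0" if "j \<in> {1..p}" for j
    using a that unfolding wedge_set_def by blast
  have mono: "a j \<le> a i" if "i \<in> {1..p}" "j \<in> {1..p}" "i \<le> j" for i j
    using a that unfolding wedge_set_def by blast
  have head: "s + 1 \<in> {1..p}" using \<open>s < p\<close> by simp
  show ?thesis
    unfolding wedge_set_def
  proof (intro CollectI conjI ballI impI)
    fix j assume "j \<in> {1..p}"
    then show "0 < (if j \<le> s then a (s + 1) else a j)"
      using pos head by simp
  next
    fix i j assume ij: "i \<in> {1..p}" "j \<in> {1..p}" "i \<le> j"
    then show "(if j \<le> s then a (s + 1) else a j) \<le> (if i \<le> s then a (s + 1) else a i)"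
      using mono[OF ij] mono[OF head, of j] head by auto
  qed
qed

lemma wedge_objective_nonneg:
  assumes "a \<in> wedge_set p"
  shows "0 \<le> (1/2) * (\<Sum>j=1..p. \<beta> j ^ 2 / a j + a j)"
proof -
  have "0 \<le> \<beta> j ^ 2 / a j + a j" if "j \<in> {1..p}" for j
  proof -
    have "a j > 0" using assms that unfolding wedge_set_def by blast
    then show ?thesis by simp
  qed
  then show ?thesis by (intro mult_nonneg_nonneg sum_nonneg) simp_all
qed

lemma wedge_norm_le_objective:
  assumes "a \<in> wedge_set p"
  shows "wedge_norm p \<beta> \<le> (1/2) * (\<Sum>j=1..p. \<beta> j ^ 2 / a j + a j)"
  unfolding wedge_norm_def
proof (rule cInf_lower)
  show "bdd_below {(1/2) * (\<Sum>j=1..p. \<beta> j ^ 2 / a j + a j) | a. a \<in> wedge_set p}"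
    using wedge_objective_nonneg by (intro bdd_belowI[of _ 0]) blast
qed (use assms in blast)

lemma le_Omega_compl:
  assumes "\<And>a. a \<in> wedge_set p \<Longrightarrow> c \<le> (1/2) * (\<Sum>j\<in>{s+1..p}. \<beta> j ^ 2 / a j + a j)"
  shows "c \<le> Omega_compl p s \<beta>"
  unfolding Omega_compl_def
proof (rule cInf_greatest)
  show "{(1/2) * (\<Sum>j\<in>{s+1..p}. \<beta> j ^ 2 / a j + a j) | a. a \<in> wedge_set p} \<noteq> {}"
    using const_in_wedge_set[OF zero_less_one] by blast
qed (use assms in blast)

lemma wedge_norm_le_compl_objective:
  fixes r :: real
  assumes a: "a \<in> wedge_set p" and "s < p"
    and \<beta>_head: "\<And>j. j \<in> {1..s} \<Longrightarrow> \<beta> j = 0"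
    and r: "r > 0" "r * r = real s + 1"
  shows "wedge_norm p \<beta> \<le> r * ((1/2) * (\<Sum>j\<in>{s+1..p}. \<beta> j ^ 2 / a j + a j))"
proof -
  define b where "b j = (1/r) * (if j \<le> s then a (s + 1) else a j)" for j
  define X where "X = (\<Sum>j\<in>{s+1..p}. \<beta> j ^ 2 / a j)"
  define Y where "Y = (\<Sum>j\<in>{s+1..p}. a j)"
  have b: "b \<in> wedge_set p"
    unfolding b_def using \<open>r > 0\<close>
    by (intro scaled_in_wedge_set flattened_head_in_wedge_set a \<open>s < p\<close>) simp
  have "a j > 0" if "j \<in> {s+1..p}" for j
    using a that unfolding wedge_set_def by auto
  then have "a (s + 1) \<le> Y"
    unfolding Y_def using \<open>s < p\<close> by (intro member_le_sum) (auto intro: less_imp_le)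
  then have "real s * a (s + 1) + Y \<le> r * r * Y"
    using r(2) mult_left_mono[of "a (s + 1)" Y "real s"] by (simp add: algebra_simps)
  then have linear_terms: "real s * (a (s + 1) / r) + Y / r \<le> r * Y"
    using r(1) by (simp add: field_simps)
  have "{1..p} = {1..s} \<union> {s+1..p}" using \<open>s < p\<close> by auto
  then have "(\<Sum>j=1..p. \<beta> j ^ 2 / b j + b j)
      = (\<Sum>j\<in>{1..s}. \<beta> j ^ 2 / b j + b j) + (\<Sum>j\<in>{s+1..p}. \<beta> j ^ 2 / b j + b j)"
    by (simp add: sum.union_disjoint)
  also have "(\<Sum>j\<in>{1..s}. \<beta> j ^ 2 / b j + b j) = real s * (a (s + 1) / r)"
    using \<beta>_head by (simp add: b_def)
  also have "(\<Sum>j\<in>{s+1..p}. \<beta> j ^ 2 / b j + b j) = (\<Sum>j\<in>{s+1..p}. r * (\<beta> j ^ 2 / a j) + a j / r)"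
    by (rule sum.cong) (auto simp: b_def)
  also have "\<dots> = r * X + Y / r"
    by (simp add: X_def Y_def sum.distrib sum_distrib_left sum_divide_distrib)
  finally have "(\<Sum>j=1..p. \<beta> j ^ 2 / b j + b j) \<le> r * (X + Y)"
    using linear_terms by (simp add: algebra_simps)
  then have "wedge_norm p \<beta> \<le> r * ((1/2) * (X + Y))"
    using wedge_norm_le_objective[OF b, of \<beta>] by simp
  then show ?thesis by (simp add: X_def Y_def sum.distrib)
qed

theorem lemma7:
  fixes p s :: nat and \<beta> :: "nat \<Rightarrow> real"
  assumes "1 \<le> s" and "s \<le> p - 1"
  shows "wedge_norm p (restrict_compl s \<beta>)
           \<le> sqrt (real s + 1) * Omega_compl p s (restrict_compl s \<beta>)"
proof -
  define r where "r = sqrt (real s + 1)"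
  have r: "r > 0" "r * r = real s + 1" unfolding r_def by simp_all
  have "s < p" using assms by linarith
  have head: "\<And>j. j \<in> {1..s} \<Longrightarrow> restrict_compl s \<beta> j = 0"
    unfolding restrict_compl_def by simp
  have "wedge_norm p (restrict_compl s \<beta>) / r \<le> Omega_compl p s (restrict_compl s \<beta>)"
  proof (rule le_Omega_compl)
    fix a assume "a \<in> wedge_set p"
    from wedge_norm_le_compl_objective[OF this \<open>s < p\<close> head r]
    show "wedge_norm p (restrict_compl s \<beta>) / r
        \<le> (1/2) * (\<Sum>j\<in>{s+1..p}. restrict_compl s \<beta> j ^ 2 / a j + a j)"
      by (simp add: pos_divide_le_eq[OF r(1)] mult.commute)
  qed
  then show ?thesis
    unfolding r_def[symmetric] by (simp add: pos_divide_le_eq[OF r(1)] mult.commute)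
qed

end
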